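(* Let $W$ be a rational $\mathfrak{sl}(2)$-module. If $W$ is $\mathcal R$-simple, then $\mathrm{End}_{\mathfrak{sl}(2)}(W)=\mathbb{C}$ (the scalar multiples of the identity).
   Context: $\mathfrak{sl}(2)$ has basis $L_{-1}=f$, $L_0=-\tfrac12 h$, $L_1=-e$ for a Chevalley basis $e,f,h$. An $\mathfrak{sl}(2)$-module is a $\mathbb{C}[z]$-module via $z\cdot v=L_0 v$; it is rational if with this structure it is a finite-dimensional $\mathbb{C}(z)$-vector space. A rational module $W$ is $\mathcal R$-simple if $W\neq0$ and $W$ has no nonzero proper $\mathfrak{sl}(2)$-submodule that is a $\mathbb{C}(z)$-vector subspace (rational submodule). *)

theory Defs
  imports Main "HOL-Computational_Algebra.Polynomial" "HOL-Computational_Algebra.Fraction_Field"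
begin

text \<open>An sl(2)-module: a complex vector space (the whole type 'v, with scalar
  multiplication s) with three C-linear operators Lm = L_{-1} = f, L0 = L_0 = -h/2,
  Lp = L_1 = -e satisfying [L_m, L_n] = (m - n) L_{m+n}.\<close>

definition sl2_module ::
  "(complex \<Rightarrow> 'v::ab_group_add \<Rightarrow> 'v) \<Rightarrow> ('v \<Rightarrow> 'v) \<Rightarrow> ('v \<Rightarrow> 'v) \<Rightarrow> ('v \<Rightarrow> 'v) \<Rightarrow> bool" where
  "sl2_module s Lm L0 Lp \<longleftrightarrow>
     vector_space s \<and> Vector_Spaces.linear s s Lm \<and> Vector_Spaces.linear s s L0 \<and> Vector_Spaces.linear s s Lp \<and>
     (\<forall>v. Lp (Lm v) - Lm (Lp v) = s 2 (L0 v)) \<and>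
     (\<forall>v. L0 (Lp v) - Lp (L0 v) = s (-1) (Lp v)) \<and>
     (\<forall>v. L0 (Lm v) - Lm (L0 v) = Lm v)"

text \<open>Action of a polynomial p in C[z] via z \<cdot> v = L_0 v.\<close>

definition pact :: "(complex \<Rightarrow> 'v::ab_group_add \<Rightarrow> 'v) \<Rightarrow> ('v \<Rightarrow> 'v) \<Rightarrow> complex poly \<Rightarrow> 'v \<Rightarrow> 'v" where
  "pact s L0 p v = (\<Sum>i\<le>degree p. s (coeff p i) ((L0 ^^ i) v))"

text \<open>Action of a rational function p/q in C(z) (meaningful when nonzero polynomials act
  bijectively): (p/q) \<cdot> v = p(L_0) (q(L_0)^{-1} v).\<close>

definition ract :: "(complex \<Rightarrow> 'v::ab_group_add \<Rightarrow> 'v) \<Rightarrow> ('v \<Rightarrow> 'v) \<Rightarrow> complex poly fract \<Rightarrow> 'v \<Rightarrow> 'v" where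
  "ract s L0 r v =
     (let pq = (SOME pq. snd pq \<noteq> 0 \<and> r = Fract (fst pq) (snd pq))
      in pact s L0 (fst pq) (inv (pact s L0 (snd pq)) v))"

text \<open>Rational module: the C[z]-module structure makes W a C(z)-vector space (i.e. every
  nonzero polynomial acts invertibly), finite-dimensional over C(z).\<close>

definition rational_module ::
  "(complex \<Rightarrow> 'v::ab_group_add \<Rightarrow> 'v) \<Rightarrow> ('v \<Rightarrow> 'v) \<Rightarrow> ('v \<Rightarrow> 'v) \<Rightarrow> ('v \<Rightarrow> 'v) \<Rightarrow> bool" where
  "rational_module s Lm L0 Lp \<longleftrightarrow>
     sl2_module s Lm L0 Lp \<and>
     (\<forall>q. q \<noteq> 0 \<longrightarrow> bij (pact s L0 q)) \<and>
     (\<exists>B. finite B \<and> (\<forall>v. \<exists>c. v = (\<Sum>b\<in>B. ract s L0 (c b) b)))"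

definition rational_submodule ::
  "(complex \<Rightarrow> 'v::ab_group_add \<Rightarrow> 'v) \<Rightarrow> ('v \<Rightarrow> 'v) \<Rightarrow> ('v \<Rightarrow> 'v) \<Rightarrow> ('v \<Rightarrow> 'v) \<Rightarrow> 'v set \<Rightarrow> bool" where
  "rational_submodule s Lm L0 Lp U \<longleftrightarrow>
     0 \<in> U \<and> (\<forall>u\<in>U. \<forall>w\<in>U. u + w \<in> U) \<and>
     (\<forall>c. \<forall>u\<in>U. s c u \<in> U) \<and>
     (\<forall>r. \<forall>u\<in>U. ract s L0 r u \<in> U) \<and>
     (\<forall>u\<in>U. Lm u \<in> U \<and> L0 u \<in> U \<and> Lp u \<in> U)"

definition R_simple ::
  "(complex \<Rightarrow> 'v::ab_group_add \<Rightarrow> 'v) \<Rightarrow> ('v \<Rightarrow> 'v) \<Rightarrow> ('v \<Rightarrow> 'v) \<Rightarrow> ('v \<Rightarrow> 'v) \<Rightarrow> bool" where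
  "R_simple s Lm L0 Lp \<longleftrightarrow>
     rational_module s Lm L0 Lp \<and> (\<exists>v::'v. v \<noteq> 0) \<and>
     (\<forall>U. rational_submodule s Lm L0 Lp U \<longrightarrow> U = {0} \<or> U = UNIV)"

definition sl2_End ::
  "(complex \<Rightarrow> 'v::ab_group_add \<Rightarrow> 'v) \<Rightarrow> ('v \<Rightarrow> 'v) \<Rightarrow> ('v \<Rightarrow> 'v) \<Rightarrow> ('v \<Rightarrow> 'v) \<Rightarrow> ('v \<Rightarrow> 'v) set" where
  "sl2_End s Lm L0 Lp =
     {\<phi>. Vector_Spaces.linear s s \<phi> \<and> (\<forall>v. \<phi> (Lm v) = Lm (\<phi> v) \<and> \<phi> (L0 v) = L0 (\<phi> v) \<and> \<phi> (Lp v) = Lp (\<phi> v))}"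

end

theory Submission
  imports Defs "HOL-Computational_Algebra.Fundamental_Theorem_Algebra"
begin

text \<open>
  An endomorphism \<open>\<phi>\<close> commutes with \<open>L\<^sub>0\<close>, so it is \<open>\<complex>(z)\<close>-linear on the
  finite-dimensional \<open>\<complex>(z)\<close>-space \<open>W\<close>, and some nonzero \<open>P(z, t) \<in> \<complex>[z][t]\<close>
  satisfies \<open>P(L\<^sub>0, \<phi>) = 0\<close>. The operator \<open>L\<^sub>-\<^sub>1\<close> is injective: for \<open>v \<noteq> 0\<close>
  with \<open>L\<^sub>-\<^sub>1 v = 0\<close> the vectors \<open>L\<^sub>1\<^sup>k v\<close> would be linearly independent over
  \<open>\<complex>[z]\<close>. Since \<open>L\<^sub>-\<^sub>1 P(L\<^sub>0 + 1, \<phi>) = P(L\<^sub>0, \<phi>) L\<^sub>-\<^sub>1\<close>, also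
  \<open>P(z + 1, t) - P(z, t)\<close> annihilates \<open>\<phi>\<close>. This difference lowers the \<open>z\<close>-degree of all
  coefficients, so eventually a nonzero \<open>g(t) \<in> \<complex>[t]\<close> with \<open>g(\<phi>) = 0\<close> appears. Hence
  \<open>\<phi>\<close> has an eigenvalue \<open>c\<close>, and the \<open>c\<close>-eigenspace is a nonzero rational submodule,
  that is, all of \<open>W\<close>.
\<close>

section \<open>Shifting the variable of a polynomial\<close>

lemma degree_pcompose_shift_diff_le:
  fixes p :: "'a::idom poly"
  shows "degree (p \<circ>\<^sub>p [:c, 1:] - p) \<le> degree p - 1"
proof (cases "degree p = 0")
  case True
  then obtain a where "p = [:a:]"
    using degree0_coeffs by blast
  then show ?thesis
    by simp
next
  case False
  have deg: "degree (p \<circ>\<^sub>p [:c, 1:]) = degree p"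
    by (simp add: degree_pcompose)
  then have "coeff (p \<circ>\<^sub>p [:c, 1:]) (degree p) = lead_coeff p"
    using lead_coeff_comp[of "[:c, 1:]" p] by simp
  with deg have le: "degree (p \<circ>\<^sub>p [:c, 1:] - p) \<le> degree p"
    and top: "coeff (p \<circ>\<^sub>p [:c, 1:] - p) (degree p) = 0"
    using degree_diff_le[of "p \<circ>\<^sub>p [:c, 1:]" "degree p" p] by simp_all
  show ?thesis
  proof (rule ccontr)
    assume "\<not> ?thesis"
    with le have "degree (p \<circ>\<^sub>p [:c, 1:] - p) = degree p"
      by linarith
    with top False show False
      by (metis degree_0 leading_coeff_0_iff)
  qed
qed

lemma degree_0_if_pcompose_shift_eq:
  fixes p :: "'a::{idom,ring_char_0} poly"
  assumes "p \<circ>\<^sub>p [:1, 1:] = p"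
  shows "degree p = 0"
proof -
  have "poly p (x + 1) = poly p x" for x
    using arg_cong[OF assms, of "\<lambda>p. poly p x"] by (simp add: poly_pcompose add.commute)
  then have "poly p (of_nat k) = poly p 0" for k
    by (induction k) (simp_all add: add.commute[of 1])
  then have "range of_nat \<subseteq> {x. poly (p - [:poly p 0:]) x = 0}"
    by auto
  moreover have "infinite (range (of_nat :: nat \<Rightarrow> 'a))"
    using finite_imageD inj_of_nat by blast
  ultimately have "p - [:poly p 0:] = 0"
    using poly_roots_finite finite_subset by blast
  then show ?thesis
    by (metis degree_pCons_0 eq_iff_diff_eq_0)
qed

lemma exists_nonzero_constant_coeffs:
  fixes Z :: "'a::{idom,ring_char_0} poly poly set"
  assumes "P \<in> Z" "P \<noteq> 0"
    and diff_shift: "\<And>P. P \<in> Z \<Longrightarrow> map_poly (\<lambda>q. q \<circ>\<^sub>p [:1, 1:]) P - P \<in> Z"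
  shows "\<exists>Q\<in>Z. Q \<noteq> 0 \<and> (\<forall>i. degree (coeff Q i) = 0)"
proof -
  have "\<exists>Q\<in>Z. Q \<noteq> 0 \<and> (\<forall>i. degree (coeff Q i) = 0)"
    if "P \<in> Z" "P \<noteq> 0" "\<forall>i. degree (coeff P i) \<le> d" for P d
    using that
  proof (induction d arbitrary: P)
    case (Suc d)
    define Q where "Q = map_poly (\<lambda>q. q \<circ>\<^sub>p [:1, 1:]) P - P"
    have coeff_Q: "coeff Q i = coeff P i \<circ>\<^sub>p [:1, 1:] - coeff P i" for i
      by (simp add: Q_def coeff_map_poly)
    show ?case
    proof (cases "Q = 0")
      case True
      then have "coeff P i \<circ>\<^sub>p [:1, 1:] = coeff P i" for i
        using coeff_Q[of i] by simp
      then have "\<forall>i. degree (coeff P i) = 0"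
        using degree_0_if_pcompose_shift_eq by blast
      with Suc.prems show ?thesis
        by blast
    next
      case False
      have "degree (coeff Q i) \<le> d" for i
        using degree_pcompose_shift_diff_le[of "coeff P i" 1] Suc.prems(3)[rule_format, of i]
        unfolding coeff_Q by linarith
      with Suc.IH[of Q] False diff_shift[OF Suc.prems(1)] show ?thesis
        by (simp add: Q_def)
    qed
  qed auto
  moreover have "degree (coeff P i) \<le> (\<Sum>j\<le>degree P. degree (coeff P j))" for i
    by (cases "i \<le> degree P") (auto intro!: member_le_sum simp: coeff_eq_0)
  ultimately show ?thesis
    using assms(1,2) by blast
qed

section \<open>Polynomials in operators\<close>

lemma commute_funpow: "(\<And>x. f (g x) = g (f x)) \<Longrightarrow> f ((g ^^ n) x) = (g ^^ n) (f x)"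
  by (induction n) simp_all

text \<open>\<open>pact2 s A B P\<close> is \<open>P(A, B)\<close> for \<open>P(z, t) \<in> \<complex>[z][t]\<close>: the variable \<open>t\<close> of the outer
  polynomial ring acts by \<open>B\<close>, the coefficients in \<open>\<complex>[z]\<close> act via \<open>pact\<close> through \<open>A\<close>.\<close>

definition pact2 ::
  "(complex \<Rightarrow> 'v::ab_group_add \<Rightarrow> 'v) \<Rightarrow> ('v \<Rightarrow> 'v) \<Rightarrow> ('v \<Rightarrow> 'v) \<Rightarrow> complex poly poly \<Rightarrow> 'v \<Rightarrow> 'v" where
  "pact2 s A B P v = (\<Sum>i\<le>degree P. pact s A (coeff P i) ((B ^^ i) v))"

locale complex_vector_space = vector_space s for s :: "complex \<Rightarrow> 'v::ab_group_add \<Rightarrow> 'v"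
begin

sublocale endo: vector_space_pair s s ..

abbreviation linear_op :: "('v \<Rightarrow> 'v) \<Rightarrow> bool" where
  "linear_op \<equiv> Vector_Spaces.linear s s"

lemma linear_funpow: "linear_op T \<Longrightarrow> linear_op (T ^^ n)"
  by (induction n) (simp_all add: linear_id Vector_Spaces.linear_compose)

lemma pact_eq_sum_atMost:
  assumes "degree p \<le> n"
  shows "pact s A p v = (\<Sum>i\<le>n. s (coeff p i) ((A ^^ i) v))"
  unfolding pact_def
  by (rule sum.mono_neutral_left) (use assms in \<open>auto simp: coeff_eq_0 not_le\<close>)

lemma pact_0 [simp]: "pact s A 0 v = 0"
  unfolding pact_def by simp

lemma pact_const [simp]: "pact s A [:a:] v = s a v"
  unfolding pact_def by simp

lemma pact_1 [simp]: "pact s A 1 v = v"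
  unfolding one_pCons pact_const by simp

lemma pact_add: "pact s A (p + q) v = pact s A p v + pact s A q v"
proof -
  let ?n = "max (degree p) (degree q)"
  show ?thesis
    using pact_eq_sum_atMost[of "p + q" ?n] pact_eq_sum_atMost[of p ?n] pact_eq_sum_atMost[of q ?n]
    by (simp add: degree_add_le scale_left_distrib sum.distrib)
qed

lemma pact_smult: "pact s A (smult a p) v = s a (pact s A p v)"
  using pact_eq_sum_atMost[of "smult a p" "degree p"]
  by (simp add: pact_def scale_sum_right)

lemma pact_minus: "pact s A (- p) v = - pact s A p v"
  by (metis add.right_inverse add_eq_0_iff pact_0 pact_add)

lemma pact_diff: "pact s A (p - q) v = pact s A p v - pact s A q v"
  by (metis diff_conv_add_uminus pact_add pact_minus)

context
  fixes A :: "'v \<Rightarrow> 'v"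
  assumes A: "linear_op A"
begin

lemma pact_pCons: "pact s A (pCons a p) v = s a v + A (pact s A p v)"
proof -
  have "pact s A (pCons a p) v = s a v + (\<Sum>i\<le>degree p. s (coeff p i) ((A ^^ Suc i) v))"
    by (subst pact_eq_sum_atMost[of _ "Suc (degree p)"])
      (simp_all add: degree_pCons_le sum.atMost_Suc_shift del: sum.atMost_Suc)
  also have "(\<Sum>i\<le>degree p. s (coeff p i) ((A ^^ Suc i) v)) = A (pact s A p v)"
    by (simp add: pact_def endo.linear_sum[OF A] endo.linear_scale[OF A])
  finally show ?thesis .
qed

lemma pact_affine: "pact s A [:a, b:] v = s a v + s b (A v)"
  by (simp add: pact_pCons endo.linear_scale[OF A])

lemma pact_mult: "pact s A (p * q) v = pact s A p (pact s A q v)"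
proof (induction p)
  case (pCons a p)
  then show ?case
    by (simp add: pact_add pact_smult pact_pCons)
qed simp

lemma pact_pact_commute: "pact s A p (pact s A q v) = pact s A q (pact s A p v)"
  by (metis mult.commute pact_mult)

lemma linear_pact: "linear_op (pact s A p)"
proof (induction p)
  case 0
  then show ?case
    using endo.module_hom_zero by simp
next
  case (pCons a p)
  have "pact s A (pCons a p) = (\<lambda>v. s a v + (A \<circ> pact s A p) v)"
    by (simp add: pact_pCons fun_eq_iff)
  then show ?case
    using endo.module_hom_add[OF linear_scale_self Vector_Spaces.linear_compose[OF pCons.IH A]]
    by simp
qed

lemma pact_intertwine:
  assumes T: "linear_op T" and TA: "\<And>x. T (A x) = A (T x) + s c (T x)"
  shows "T (pact s A p v) = pact s A (p \<circ>\<^sub>p [:c, 1:]) (T v)"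
proof (induction p)
  case (pCons a p)
  then show ?case
    by (simp add: pcompose_pCons pact_add pact_mult pact_pCons TA pact_affine pact_smult
        endo.linear_add[OF T] endo.linear_scale[OF T] add.commute)
qed (simp add: endo.linear_0[OF T])

lemma pact_commute:
  assumes "linear_op T" and "\<And>x. T (A x) = A (T x)"
  shows "T (pact s A p v) = pact s A p (T v)"
  using pact_intertwine[of T 0 p v] assms by simp

end

lemma exists_eigenvector:
  fixes v :: 'v
  assumes T: "linear_op T" and "g \<noteq> 0" "\<And>w. pact s T g w = 0" and "v \<noteq> 0"
  shows "\<exists>c w. w \<noteq> 0 \<and> T w = s c w"
  using assms(2,3)
proof (induction "degree g" arbitrary: g rule: less_induct)
  case less
  show ?case
  proof (cases "degree g = 0")
    case True
    then obtain a where "g = [:a:]"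
      using degree0_coeffs by blast
    with less.prems have "s a v = 0" "a \<noteq> 0"
      by (metis pact_const, simp)
    with \<open>v \<noteq> 0\<close> show ?thesis
      by simp
  next
    case False
    then obtain l where "poly g l = 0"
      using fundamental_theorem_of_algebra[of g] constant_degree[of g] by auto
    then obtain h where h: "g = [:-l, 1:] * h"
      by (metis dvdE poly_eq_0_iff_dvd)
    with less.prems(1) have "h \<noteq> 0"
      by auto
    then have "degree g = Suc (degree h)"
      unfolding h by (subst degree_mult_eq) simp_all
    then have "degree h < degree g"
      by simp
    have "pact s T g w = T (pact s T h w) - s l (pact s T h w)" for w
      unfolding h pact_mult[OF T] pact_affine[OF T] by (simp add: scale_minus_left)
    then show ?thesis
      using less.hyps[OF \<open>degree h < degree g\<close> \<open>h \<noteq> 0\<close>] less.prems(2) by (metis eq_iff_diff_eq_0)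
  qed
qed

lemma pact2_eq_sum_atMost:
  assumes "degree P \<le> n"
  shows "pact2 s A B P v = (\<Sum>i\<le>n. pact s A (coeff P i) ((B ^^ i) v))"
  unfolding pact2_def
  by (rule sum.mono_neutral_left) (use assms in \<open>auto simp: coeff_eq_0 not_le\<close>)

lemma pact2_0 [simp]: "pact2 s A B 0 v = 0"
  unfolding pact2_def by simp

lemma pact2_pCons: "pact2 s A B (pCons a P) v = pact s A a v + pact2 s A B P (B v)"
  by (subst pact2_eq_sum_atMost[of _ "Suc (degree P)"])
    (simp_all add: degree_pCons_le sum.atMost_Suc_shift pact2_def funpow_swap1 del: sum.atMost_Suc)

lemma pact2_add: "pact2 s A B (P + Q) v = pact2 s A B P v + pact2 s A B Q v"
proof -
  let ?n = "max (degree P) (degree Q)"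
  show ?thesis
    using pact2_eq_sum_atMost[of "P + Q" ?n] pact2_eq_sum_atMost[of P ?n] pact2_eq_sum_atMost[of Q ?n]
    by (simp add: degree_add_le pact_add sum.distrib)
qed

lemma pact2_diff: "pact2 s A B (P - Q) v = pact2 s A B P v - pact2 s A B Q v"
proof -
  let ?n = "max (degree P) (degree Q)"
  show ?thesis
    using pact2_eq_sum_atMost[of "P - Q" ?n] pact2_eq_sum_atMost[of P ?n] pact2_eq_sum_atMost[of Q ?n]
    by (simp add: degree_diff_le pact_diff sum_subtractf)
qed

lemma pact2_sum: "pact2 s A B (\<Sum>k\<in>K. P k) v = (\<Sum>k\<in>K. pact2 s A B (P k) v)"
  by (induction K rule: infinite_finite_induct) (simp_all add: pact2_add)

lemma pact2_monom: "pact2 s A B (monom c k) v = pact s A c ((B ^^ k) v)"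
proof -
  have "pact s A (coeff (monom c k) i) w = (if i = k then pact s A c w else 0)" for i w
    by (simp add: coeff_monom)
  then show ?thesis
    by (simp add: pact2_eq_sum_atMost[of _ k] degree_monom_le)
qed

lemma pact2_constant_coeffs:
  assumes "\<And>i. degree (coeff P i) = 0"
  shows "pact2 s A B P v = pact s B (map_poly (\<lambda>c. coeff c 0) P) v"
proof -
  have "coeff P i = [:coeff (map_poly (\<lambda>c. coeff c 0) P) i:]" for i
    using assms[of i] by (simp add: coeff_map_poly degree_0_id)
  then show ?thesis
    unfolding pact2_def by (subst pact_eq_sum_atMost[OF map_poly_degree_leq]) simp
qed

context
  fixes A :: "'v \<Rightarrow> 'v"
  assumes A: "linear_op A"
begin

lemma pact2_commute:
  assumes "linear_op T" "\<And>x. T (A x) = A (T x)" "\<And>x. T (B x) = B (T x)"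
  shows "T (pact2 s A B P v) = pact2 s A B P (T v)"
  unfolding pact2_def
  by (simp add: endo.linear_sum[OF assms(1)] pact_commute[OF A assms(1,2)] commute_funpow assms(3))

lemma pact2_intertwine:
  assumes "linear_op T" "\<And>x. T (A x) = A (T x) + s c (T x)" "\<And>x. T (B x) = B (T x)"
  shows "T (pact2 s A B P v) = pact2 s A B (map_poly (\<lambda>q. q \<circ>\<^sub>p [:c, 1:]) P) (T v)"
  by (subst pact2_eq_sum_atMost[OF map_poly_degree_leq[of "\<lambda>q. q \<circ>\<^sub>p [:c, 1:]" P]])
    (simp add: pact2_def endo.linear_sum[OF assms(1)] pact_intertwine[OF A assms(1,2)]
      coeff_map_poly commute_funpow assms(3))

lemma pact2_smult: "pact2 s A B (smult a P) v = pact s A a (pact2 s A B P v)"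
  by (subst pact2_eq_sum_atMost[of _ "degree P"])
    (simp_all add: pact2_def endo.linear_sum[OF linear_pact[OF A]] pact_mult[OF A])

lemma linear_pact2:
  assumes B: "linear_op B"
  shows "linear_op (pact2 s A B P)"
proof (induction P)
  case 0
  then show ?case
    using endo.module_hom_zero by (simp add: fun_eq_iff)
next
  case (pCons a P)
  have "pact2 s A B (pCons a P) = (\<lambda>v. pact s A a v + (pact2 s A B P \<circ> B) v)"
    by (simp add: pact2_pCons fun_eq_iff)
  then show ?case
    using endo.module_hom_add[OF linear_pact[OF A] Vector_Spaces.linear_compose[OF B pCons.IH]]
    by simp
qed

lemma pact2_mult:
  assumes B: "linear_op B" and AB: "\<And>x. A (B x) = B (A x)"
  shows "pact2 s A B (P * Q) v = pact2 s A B P (pact2 s A B Q v)"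
proof (induction P arbitrary: v)
  case (pCons a P)
  have "pact2 s A B (pCons a P * Q) v = pact s A a (pact2 s A B Q v) + pact2 s A B (P * Q) (B v)"
    by (simp add: pact2_add pact2_smult pact2_pCons)
  also have "pact2 s A B (P * Q) (B v) = pact2 s A B P (B (pact2 s A B Q v))"
    using pCons.IH pact2_commute[OF B AB[symmetric]] by simp
  finally show ?case
    by (simp add: pact2_pCons)
qed simp

end

end

section \<open>Operators with invertible polynomial action\<close>

locale rational_operator = complex_vector_space s for s :: "complex \<Rightarrow> 'v::ab_group_add \<Rightarrow> 'v" +
  fixes A :: "'v \<Rightarrow> 'v"
  assumes linear_A: "Vector_Spaces.linear s s A"
    and bij_pact: "q \<noteq> 0 \<Longrightarrow> bij (pact s A q)"
begin

lemma pact_inj: "q \<noteq> 0 \<Longrightarrow> pact s A q x = pact s A q y \<Longrightarrow> x = y"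
  using bij_pact bij_is_inj injD by metis

lemma pact_eq_0_iff: "pact s A p v = 0 \<longleftrightarrow> p = 0 \<or> v = 0"
  using pact_inj[of p v 0] endo.linear_0[OF linear_pact[OF linear_A]] by auto

lemma pact_inv_eq_iff:
  assumes "q \<noteq> 0"
  shows "pact s A p (inv (pact s A q) x) = y \<longleftrightarrow> pact s A q y = pact s A p x"
proof -
  have "pact s A q (pact s A p (inv (pact s A q) x)) = pact s A p x"
    using pact_pact_commute[OF linear_A] bij_pact[OF assms] by (metis bij_is_surj surj_f_inv_f)
  then show ?thesis
    using pact_inj[OF assms] by metis
qed

lemma ract_Fract:
  assumes "q \<noteq> 0"
  shows "ract s A (Fract p q) v = pact s A p (inv (pact s A q) v)"
proof -
  obtain p' q' where q': "q' \<noteq> 0" and pq: "Fract p q = Fract p' q'"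
    and ract: "ract s A (Fract p q) v = pact s A p' (inv (pact s A q') v)"
    using someI_ex[of "\<lambda>pq. snd pq \<noteq> 0 \<and> Fract p q = Fract (fst pq) (snd pq)"] assms
    unfolding ract_def by (metis (mono_tags, lifting) prod.collapse fst_conv snd_conv)
  have "pact s A q' (pact s A q (pact s A p' (inv (pact s A q') v)))
      = pact s A q (pact s A q' (pact s A p' (inv (pact s A q') v)))"
    by (rule pact_pact_commute[OF linear_A])
  also have "\<dots> = pact s A (q * p') v"
    using pact_inv_eq_iff[OF q', of p' v, THEN iffD1, OF refl] by (simp add: pact_mult[OF linear_A])
  also have "q * p' = q' * p"
    using pq assms q' by (simp add: eq_fract mult.commute)
  finally have "pact s A q (pact s A p' (inv (pact s A q') v)) = pact s A p v"
    using pact_inj[OF q'] by (simp add: pact_mult[OF linear_A])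
  then show ?thesis
    using pact_inv_eq_iff[OF assms, of p v] ract by metis
qed

lemma ract_Fract_eq_iff:
  "q \<noteq> 0 \<Longrightarrow> ract s A (Fract p q) x = y \<longleftrightarrow> pact s A q y = pact s A p x"
  by (simp add: ract_Fract pact_inv_eq_iff)

lemma pact_ract_Fract: "q \<noteq> 0 \<Longrightarrow> pact s A q (ract s A (Fract p q) x) = pact s A p x"
  using ract_Fract_eq_iff by blast

lemma vector_space_ract: "vector_space (ract s A)"
proof
  fix a :: "complex poly fract" and x y
  obtain p q where a: "a = Fract p q" "q \<noteq> 0"
    by (cases a)
  have "pact s A q (ract s A a x + ract s A a y) = pact s A p (x + y)"
    using a by (simp add: endo.linear_add[OF linear_pact[OF linear_A]] pact_ract_Fract)
  then show "ract s A a (x + y) = ract s A a x + ract s A a y"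
    using a ract_Fract_eq_iff by blast
next
  fix a b :: "complex poly fract" and x
  obtain p q where a: "a = Fract p q" "q \<noteq> 0"
    by (cases a)
  obtain p' q' where b: "b = Fract p' q'" "q' \<noteq> 0"
    by (cases b)
  have "pact s A (q * q') (ract s A a x) = pact s A (q' * p) x"
    "pact s A (q * q') (ract s A b x) = pact s A (q * p') x"
    using a b by (simp_all add: pact_mult[OF linear_A] pact_ract_Fract,
        metis pact_mult[OF linear_A] mult.commute pact_ract_Fract)
  then have "pact s A (q * q') (ract s A a x + ract s A b x) = pact s A (p * q' + p' * q) x"
    by (simp add: endo.linear_add[OF linear_pact[OF linear_A]] pact_add mult.commute)
  then show "ract s A (a + b) x = ract s A a x + ract s A b x"
    using a b ract_Fract_eq_iff by simp
  have "pact s A (q * q') (ract s A a (ract s A b x)) = pact s A p (pact s A q' (ract s A b x))"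
    using a by (simp add: pact_mult[OF linear_A] pact_pact_commute[OF linear_A] pact_ract_Fract)
  also have "\<dots> = pact s A (p * p') x"
    using b by (simp add: pact_mult[OF linear_A] pact_ract_Fract)
  finally have "ract s A (Fract (p * p') (q * q')) x = ract s A a (ract s A b x)"
    using ract_Fract_eq_iff[of "q * q'"] a(2) b(2) by simp
  then show "ract s A a (ract s A b x) = ract s A (a * b) x"
    using a b by simp
next
  show "ract s A 1 x = x" for x
    using ract_Fract_eq_iff[of 1 1 x x] by (simp add: One_fract_def)
qed

sublocale frac: vector_space "ract s A"
  by (rule vector_space_ract)

lemma ract_commute:
  assumes "Vector_Spaces.linear s s T" "\<And>x. T (A x) = A (T x)"
  shows "T (ract s A r x) = ract s A r (T x)"
proof -
  obtain p q where r: "r = Fract p q" "q \<noteq> 0"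
    by (cases r)
  then show ?thesis
    using pact_commute[OF linear_A assms] ract_Fract_eq_iff by metis
qed

lemma pact_clear_denominators:
  fixes n :: nat
  assumes "(\<Sum>k\<le>n. ract s A (u k) (g k)) = 0"
  obtains c where "\<And>k. k \<le> n \<Longrightarrow> u k \<noteq> 0 \<Longrightarrow> c k \<noteq> 0" "(\<Sum>k\<le>n. pact s A (c k) (g k)) = 0"
proof -
  have "\<forall>k. \<exists>p q. q \<noteq> 0 \<and> u k = Fract p q"
    by (metis Fract_cases)
  then obtain p q where pq: "\<And>k. q k \<noteq> 0" "\<And>k. u k = Fract (p k) (q k)"
    by metis
  define R where "R k = (\<Prod>j\<in>{..n} - {k}. q j)" for k
  define c where "c k = R k * p k" for k
  have "R k \<noteq> 0" for k
    using pq(1) by (simp add: R_def)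
  then have "u k \<noteq> 0 \<Longrightarrow> c k \<noteq> 0" for k
    using pq by (auto simp: c_def eq_fract(3) Zero_fract_def)
  moreover have "pact s A (\<Prod>j\<le>n. q j) (ract s A (u k) (g k)) = pact s A (c k) (g k)" if "k \<le> n" for k
  proof -
    have "(\<Prod>j\<le>n. q j) = R k * q k"
      using that by (simp add: R_def prod.remove mult.commute)
    then show ?thesis
      using pq by (simp add: c_def pact_mult[OF linear_A] pact_ract_Fract)
  qed
  then have "(\<Sum>k\<le>n. pact s A (c k) (g k)) = pact s A (\<Prod>j\<le>n. q j) (\<Sum>k\<le>n. ract s A (u k) (g k))"
    by (simp add: endo.linear_sum[OF linear_pact[OF linear_A]])
  ultimately show thesis
    using that assms endo.linear_0[OF linear_pact[OF linear_A]] by (metis (no_types, lifting))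
qed

lemma pact_dependent_if_frac_dependent:
  fixes n :: nat
  assumes "inj_on g {..n}" "frac.dependent (g ` {..n})"
  shows "\<exists>c. (\<exists>k\<le>n. c k \<noteq> 0) \<and> (\<Sum>k\<le>n. pact s A (c k) (g k)) = 0"
proof -
  obtain S u where S: "S \<subseteq> g ` {..n}" "(\<Sum>v\<in>S. ract s A (u v) v) = 0" "\<exists>v\<in>S. u v \<noteq> 0"
    using assms(2) unfolding frac.dependent_explicit by blast
  define u' where "u' k = (if g k \<in> S then u (g k) else 0)" for k
  have "ract s A (u' k) (g k) = (if g k \<in> S then ract s A (u (g k)) (g k) else 0)" for k
    by (simp add: u'_def)
  then have "(\<Sum>k\<le>n. ract s A (u' k) (g k)) = (\<Sum>v\<in>g ` {..n}. if v \<in> S then ract s A (u v) v else 0)"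
    using assms(1) by (simp add: sum.reindex)
  also have "\<dots> = (\<Sum>v\<in>S. ract s A (u v) v)"
    using S(1) by (simp add: sum.inter_restrict[symmetric] Int_absorb1)
  finally have "(\<Sum>k\<le>n. ract s A (u' k) (g k)) = 0"
    using S(2) by simp
  then obtain c where "\<And>k. k \<le> n \<Longrightarrow> u' k \<noteq> 0 \<Longrightarrow> c k \<noteq> 0" "(\<Sum>k\<le>n. pact s A (c k) (g k)) = 0"
    by (rule pact_clear_denominators) auto
  moreover obtain k where "k \<le> n" "u' k \<noteq> 0"
    using S(1,3) unfolding u'_def by force
  ultimately show ?thesis
    by blast
qed

lemma pact_dependent_if_finite_span:
  assumes "finite B" "\<And>v. \<exists>c. v = (\<Sum>b\<in>B. ract s A (c b) b)"
  shows "\<exists>c. (\<exists>k\<le>card B. c k \<noteq> 0) \<and> (\<Sum>k\<le>card B. pact s A (c k) (g k)) = 0"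
proof (cases "inj_on g {..card B}")
  case True
  have "v \<in> frac.span B" for v
  proof -
    obtain c where "v = (\<Sum>b\<in>B. ract s A (c b) b)"
      using assms(2) by blast
    then show ?thesis
      by (simp add: frac.span_base frac.span_scale frac.span_sum)
  qed
  then have "frac.dependent (g ` {..card B})"
    using frac.independent_span_bound[OF assms(1), of "g ` {..card B}"] True
    by (auto simp: card_image)
  with True show ?thesis
    by (rule pact_dependent_if_frac_dependent)
next
  case False
  then obtain i j where ij: "i \<le> card B" "j \<le> card B" "i \<noteq> j" "g i = g j"
    unfolding inj_on_def by auto
  define c :: "nat \<Rightarrow> complex poly" where "c k = (if k = i then 1 else if k = j then -1 else 0)" for k
  have "pact s A (c k) (g k) = (if k = i then g k else 0) - (if k = j then g k else 0)" for k
    using ij(3) by (auto simp: c_def pact_minus)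
  then have "(\<Sum>k\<le>card B. pact s A (c k) (g k)) = 0"
    using ij by (simp add: sum_subtractf)
  then show ?thesis
    using ij by (intro exI[of _ c]) (auto simp: c_def)
qed

end

section \<open>Representations of \<open>sl(2)\<close>\<close>

definition lowering_poly :: "nat \<Rightarrow> complex poly" where
  "lowering_poly k = smult (of_nat (Suc k)) [:of_nat k, -2:]"

lemma lowering_poly_pcompose_neq_0: "lowering_poly k \<circ>\<^sub>p [:a, 1:] \<noteq> 0"
proof -
  have "(of_nat (Suc k) :: complex) \<noteq> 0"
    by (rule of_nat_neq_0)
  then show ?thesis
    by (simp add: lowering_poly_def pcompose_eq_0_iff del: of_nat_Suc)
qed

locale sl2_representation =
  fixes s :: "complex \<Rightarrow> 'v::ab_group_add \<Rightarrow> 'v" and Lm L0 Lp :: "'v \<Rightarrow> 'v"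
  assumes sl2_module: "sl2_module s Lm L0 Lp"
begin

sublocale complex_vector_space s
  using sl2_module by (simp add: sl2_module_def complex_vector_space_def)

lemma linear_Lm: "linear_op Lm" and linear_L0: "linear_op L0" and linear_Lp: "linear_op Lp"
  using sl2_module by (simp_all add: sl2_module_def)

lemma Lm_L0: "Lm (L0 v) = L0 (Lm v) + s (-1) (Lm v)"
  using sl2_module by (simp add: sl2_module_def algebra_simps)

lemma Lp_L0: "Lp (L0 v) = L0 (Lp v) + s 1 (Lp v)"
  using sl2_module by (simp add: sl2_module_def algebra_simps)

lemma Lm_Lp: "Lm (Lp v) = Lp (Lm v) - s 2 (L0 v)"
  using sl2_module by (simp add: sl2_module_def algebra_simps)

lemma Lm_pact: "Lm (pact s L0 p v) = pact s L0 (p \<circ>\<^sub>p [:-1, 1:]) (Lm v)"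
  using pact_intertwine[OF linear_L0 linear_Lm Lm_L0] by simp

lemma Lp_funpow_L0: "(Lp ^^ j) (L0 v) = L0 ((Lp ^^ j) v) + s (of_nat j) ((Lp ^^ j) v)"
proof (induction j)
  case (Suc j)
  then show ?case
    by (simp add: Lp_L0 endo.linear_add[OF linear_Lp] endo.linear_scale[OF linear_Lp]
        scale_left_distrib add.assoc add.commute)
qed simp

lemma Lp_funpow_pact: "(Lp ^^ j) (pact s L0 p v) = pact s L0 (p \<circ>\<^sub>p [:of_nat j, 1:]) ((Lp ^^ j) v)"
  by (rule pact_intertwine[OF linear_L0 linear_funpow[OF linear_Lp] Lp_funpow_L0])

lemma Lm_Lp_funpow_Suc:
  assumes "Lm w = 0"
  shows "Lm ((Lp ^^ Suc k) w) = (Lp ^^ k) (pact s L0 (lowering_poly k) w)"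
proof (induction k)
  case 0
  then show ?case
    using Lm_Lp[of w] assms
    by (simp add: lowering_poly_def pact_affine[OF linear_L0] endo.linear_0[OF linear_Lp])
next
  case (Suc k)
  define T where "T = Lp ^^ Suc k"
  have T: "linear_op T"
    unfolding T_def by (rule linear_funpow[OF linear_Lp])
  have "L0 (T w) = T (L0 w) - s (of_nat (Suc k)) (T w)"
    using Lp_funpow_L0[of "Suc k" w] by (simp add: T_def)
  moreover have "Lp (Lm (T w)) = T (pact s L0 (lowering_poly k) w)"
    using Suc.IH by (simp add: T_def)
  ultimately have "Lm (Lp (T w)) = T (pact s L0 (lowering_poly k) w - s 2 (L0 w - s (of_nat (Suc k)) w))"
    using Lm_Lp[of "T w"] by (simp add: endo.linear_diff[OF T] endo.linear_scale[OF T])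
  also have "lowering_poly (Suc k) = lowering_poly k + [:2 * of_nat (Suc k), -2:]"
    by (simp add: lowering_poly_def algebra_simps)
  then have "pact s L0 (lowering_poly k) w - s 2 (L0 w - s (of_nat (Suc k)) w) = pact s L0 (lowering_poly (Suc k)) w"
    by (simp only: pact_add pact_affine[OF linear_L0])
      (simp add: scale_right_diff_distrib algebra_simps)
  finally show ?case
    by (simp add: T_def)
qed

lemma Lm_sum_pact_Lp_funpow:
  assumes "Lm v = 0"
  shows "Lm (\<Sum>k\<le>Suc N. pact s L0 (c k) ((Lp ^^ k) v))
    = (\<Sum>j\<le>N. pact s L0 ((c (Suc j) \<circ>\<^sub>p [:-1, 1:]) * (lowering_poly j \<circ>\<^sub>p [:of_nat j, 1:]))
        ((Lp ^^ j) v))"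
proof -
  have step: "Lm (pact s L0 (c (Suc j)) ((Lp ^^ Suc j) v))
      = pact s L0 ((c (Suc j) \<circ>\<^sub>p [:-1, 1:]) * (lowering_poly j \<circ>\<^sub>p [:of_nat j, 1:])) ((Lp ^^ j) v)"
    for j
    using Lm_Lp_funpow_Suc[OF assms, of j] Lp_funpow_pact[of j]
    by (simp add: Lm_pact pact_mult[OF linear_L0])
  have "Lm (\<Sum>k\<le>Suc N. pact s L0 (c k) ((Lp ^^ k) v)) = (\<Sum>k\<le>Suc N. Lm (pact s L0 (c k) ((Lp ^^ k) v)))"
    by (rule endo.linear_sum[OF linear_Lm])
  also have "\<dots> = Lm (pact s L0 (c 0) v) + (\<Sum>j\<le>N. Lm (pact s L0 (c (Suc j)) ((Lp ^^ Suc j) v)))"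
    by (subst sum.atMost_Suc_shift) simp
  finally show ?thesis
    unfolding step using assms by (simp add: Lm_pact endo.linear_0[OF linear_pact[OF linear_L0]])
qed

lemma scale_in_sl2_End: "s c \<in> sl2_End s Lm L0 Lp"
  by (simp add: sl2_End_def endo.linear_scale[OF linear_Lm] endo.linear_scale[OF linear_L0]
      endo.linear_scale[OF linear_Lp])

end

locale rational_sl2_module = sl2_representation +
  assumes rational_module: "rational_module s Lm L0 Lp"
begin

sublocale rational_operator s L0
  using rational_module linear_L0
  by (intro rational_operator.intro complex_vector_space_axioms rational_operator_axioms.intro)
    (simp_all add: rational_module_def)

lemma pact_dependent:
  "\<exists>n::nat. \<forall>g. \<exists>c. (\<exists>k\<le>n. c k \<noteq> 0) \<and> (\<Sum>k\<le>n. pact s L0 (c k) (g k)) = 0"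
proof -
  obtain B where B: "finite B" "\<And>v. \<exists>c. v = (\<Sum>b\<in>B. ract s L0 (c b) b)"
    using rational_module by (auto simp: rational_module_def)
  show ?thesis
    by (intro exI[of _ "card B"] allI pact_dependent_if_finite_span[OF B])
qed

lemma Lp_funpow_pact_independent:
  assumes "Lm v = 0" "v \<noteq> 0"
  shows "(\<Sum>k\<le>N. pact s L0 (c k) ((Lp ^^ k) v)) = 0 \<Longrightarrow> k \<le> N \<Longrightarrow> c k = 0"
proof (induction N arbitrary: c k)
  case 0
  then show ?case
    using assms(2) by (simp add: pact_eq_0_iff)
next
  case (Suc N)
  have "(\<Sum>j\<le>N. pact s L0 ((c (Suc j) \<circ>\<^sub>p [:-1, 1:]) * (lowering_poly j \<circ>\<^sub>p [:of_nat j, 1:]))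
      ((Lp ^^ j) v)) = Lm (\<Sum>k\<le>Suc N. pact s L0 (c k) ((Lp ^^ k) v))" (is "?lhs = _")
    by (rule Lm_sum_pact_Lp_funpow[OF assms(1), symmetric])
  also have "\<dots> = 0"
    unfolding Suc.prems(1) by (rule endo.linear_0[OF linear_Lm])
  finally have "?lhs = 0" .
  then have "c (Suc j) \<circ>\<^sub>p [:-1, 1:] = 0" if "j \<le> N" for j
    using Suc.IH that lowering_poly_pcompose_neq_0 by (meson mult_eq_0_iff)
  then have c_Suc: "c (Suc j) = 0" if "j \<le> N" for j
    using that by (simp add: pcompose_eq_0_iff)
  then have "pact s L0 (c 0) v = 0"
    using Suc.prems(1) by (simp add: sum.atMost_Suc_shift del: sum.atMost_Suc)
  then have "c 0 = 0"
    using assms(2) by (simp add: pact_eq_0_iff)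
  with c_Suc Suc.prems(2) show ?case
    by (cases k) simp_all
qed

lemma Lm_eq_0_iff: "Lm v = 0 \<longleftrightarrow> v = 0"
proof
  assume "Lm v = 0"
  show "v = 0"
  proof (rule ccontr)
    assume "v \<noteq> 0"
    from pact_dependent obtain n :: nat where "\<forall>g. \<exists>c. (\<exists>k\<le>n. c k \<noteq> 0) \<and> (\<Sum>k\<le>n. pact s L0 (c k) (g k)) = 0" ..
    from spec[OF this, of "\<lambda>k. (Lp ^^ k) v"]
    obtain c k where "k \<le> n" "c k \<noteq> 0" "(\<Sum>k\<le>n. pact s L0 (c k) ((Lp ^^ k) v)) = 0"
      by blast
    then show False
      using Lp_funpow_pact_independent[OF \<open>Lm v = 0\<close> \<open>v \<noteq> 0\<close>] by simp
  qed
qed (simp add: endo.linear_0[OF linear_Lm])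

section \<open>Endomorphisms of a rational module\<close>

context
  fixes \<phi> :: "'a \<Rightarrow> 'a"
  assumes \<phi>: "\<phi> \<in> sl2_End s Lm L0 Lp"
begin

lemma linear_\<phi>: "linear_op \<phi>"
  and \<phi>_Lm: "\<phi> (Lm v) = Lm (\<phi> v)" and \<phi>_L0: "\<phi> (L0 v) = L0 (\<phi> v)" and \<phi>_Lp: "\<phi> (Lp v) = Lp (\<phi> v)"
  using \<phi> by (simp_all add: sl2_End_def)

lemma pact2_annihilator_vector: "\<exists>P. P \<noteq> 0 \<and> pact2 s L0 \<phi> P b = 0"
proof -
  obtain n :: nat where "\<forall>g. \<exists>c. (\<exists>k\<le>n. c k \<noteq> 0) \<and> (\<Sum>k\<le>n. pact s L0 (c k) (g k)) = 0"
    using pact_dependent by blast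
  from spec[OF this, of "\<lambda>k. (\<phi> ^^ k) b"] obtain c k0 where
    c: "k0 \<le> n" "c k0 \<noteq> 0" "(\<Sum>k\<le>n. pact s L0 (c k) ((\<phi> ^^ k) b)) = 0"
    by blast
  define P where "P = (\<Sum>k\<le>n. monom (c k) k)"
  have "coeff P k0 = c k0"
    using c(1) by (simp add: P_def coeff_sum)
  then have "P \<noteq> 0"
    using c(2) by auto
  moreover have "pact2 s L0 \<phi> P b = 0"
    using c(3) by (simp add: P_def pact2_sum pact2_monom)
  ultimately show ?thesis
    by blast
qed

lemma pact2_annihilator_finite:
  assumes "finite S"
  shows "\<exists>P. P \<noteq> 0 \<and> (\<forall>b\<in>S. pact2 s L0 \<phi> P b = 0)"
  using assms
proof (induction S rule: finite_induct)
  case empty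
  then show ?case
    by (intro exI[of _ 1]) simp
next
  case (insert b S)
  obtain P where P: "P \<noteq> 0" "\<forall>b\<in>S. pact2 s L0 \<phi> P b = 0"
    using insert.IH by blast
  obtain Q where Q: "Q \<noteq> 0" "pact2 s L0 \<phi> Q b = 0"
    using pact2_annihilator_vector by blast
  have pact2_0_right: "pact2 s L0 \<phi> R 0 = 0" for R
    by (rule endo.linear_0[OF linear_pact2[OF linear_L0 linear_\<phi>]])
  have "pact2 s L0 \<phi> (Q * P) b' = 0" if "b' \<in> insert b S" for b'
  proof (cases "b' = b")
    case True
    have "pact2 s L0 \<phi> (P * Q) b' = pact2 s L0 \<phi> P (pact2 s L0 \<phi> Q b')"
      by (rule pact2_mult[OF linear_L0 linear_\<phi> \<phi>_L0[symmetric]])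
    with True Q(2) pact2_0_right show ?thesis
      by (simp add: mult.commute)
  next
    case False
    have "pact2 s L0 \<phi> (Q * P) b' = pact2 s L0 \<phi> Q (pact2 s L0 \<phi> P b')"
      by (rule pact2_mult[OF linear_L0 linear_\<phi> \<phi>_L0[symmetric]])
    with False that P(2) pact2_0_right show ?thesis
      by simp
  qed
  then show ?case
    using P(1) Q(1) by (intro exI[of _ "Q * P"]) simp
qed

lemma pact2_annihilator: "\<exists>P. P \<noteq> 0 \<and> (\<forall>w. pact2 s L0 \<phi> P w = 0)"
proof -
  obtain B where B: "finite B" "\<And>v. \<exists>c. v = (\<Sum>b\<in>B. ract s L0 (c b) b)"
    using rational_module by (auto simp: rational_module_def)
  then obtain P where P: "P \<noteq> 0" "\<forall>b\<in>B. pact2 s L0 \<phi> P b = 0"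
    using pact2_annihilator_finite by blast
  have "pact2 s L0 \<phi> P w = 0" for w
  proof -
    obtain c where "w = (\<Sum>b\<in>B. ract s L0 (c b) b)"
      using B(2) by blast
    then show ?thesis
      using P(2) ract_commute[OF linear_pact2[OF linear_L0 linear_\<phi>]
          pact2_commute[where B = \<phi>, OF linear_L0 linear_L0 refl \<phi>_L0[symmetric], symmetric]]
      by (simp add: endo.linear_sum[OF linear_pact2[OF linear_L0 linear_\<phi>]])
  qed
  with P(1) show ?thesis
    by blast
qed

lemma sl2_End_algebraic: "\<exists>g. g \<noteq> 0 \<and> (\<forall>w. pact s \<phi> g w = 0)"
proof -
  define Z where "Z = {P. \<forall>w. pact2 s L0 \<phi> P w = 0}"
  have "map_poly (\<lambda>q. q \<circ>\<^sub>p [:1, 1:]) P - P \<in> Z" if "P \<in> Z" for P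
  proof -
    have "map_poly (\<lambda>q. q \<circ>\<^sub>p [:-1, 1:]) (map_poly (\<lambda>q. q \<circ>\<^sub>p [:1, 1:]) P) = P"
      by (simp add: map_poly_map_poly comp_def pcompose_assoc[symmetric] pcompose_pCons)
    then have "Lm (pact2 s L0 \<phi> (map_poly (\<lambda>q. q \<circ>\<^sub>p [:1, 1:]) P) w) = pact2 s L0 \<phi> P (Lm w)" for w
      using pact2_intertwine[where B = \<phi>, OF linear_L0 linear_Lm Lm_L0 \<phi>_Lm[symmetric]] by metis
    then show ?thesis
      using that by (simp add: Z_def Lm_eq_0_iff pact2_diff)
  qed
  moreover obtain P where "P \<noteq> 0" "P \<in> Z"
    using pact2_annihilator by (auto simp: Z_def)
  ultimately obtain Q where Q: "Q \<in> Z" "Q \<noteq> 0" "\<And>i. degree (coeff Q i) = 0"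
    using exists_nonzero_constant_coeffs by metis
  define g where "g = map_poly (\<lambda>c. coeff c 0) Q"
  have "coeff Q (degree Q) = [:coeff g (degree Q):]"
    using Q(3) by (simp add: g_def coeff_map_poly degree_0_id)
  then have "g \<noteq> 0"
    using Q(2) by auto
  moreover have "pact s \<phi> g w = 0" for w
    using Q(1,3) pact2_constant_coeffs[of Q] by (simp add: Z_def g_def)
  ultimately show ?thesis
    by blast
qed

lemma eigenspace_rational_submodule: "rational_submodule s Lm L0 Lp {w. \<phi> w = s c w}"
proof -
  define \<psi> where "\<psi> x = \<phi> x - s c x" for x
  have \<psi>: "linear_op \<psi>"
    unfolding \<psi>_def by (rule endo.module_hom_sub[OF linear_\<phi> linear_scale_self])
  have \<psi>_L0: "\<psi> (L0 x) = L0 (\<psi> x)" for x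
    by (simp add: \<psi>_def \<phi>_L0 endo.linear_diff[OF linear_L0] endo.linear_scale[OF linear_L0])
  have \<psi>_Lm: "\<psi> (Lm x) = Lm (\<psi> x)" and \<psi>_Lp: "\<psi> (Lp x) = Lp (\<psi> x)" for x
    by (simp_all add: \<psi>_def \<phi>_Lm \<phi>_Lp endo.linear_diff[OF linear_Lm] endo.linear_scale[OF linear_Lm]
        endo.linear_diff[OF linear_Lp] endo.linear_scale[OF linear_Lp])
  have eigen_iff: "\<phi> w = s c w \<longleftrightarrow> \<psi> w = 0" for w
    by (simp add: \<psi>_def)
  show ?thesis
    unfolding rational_submodule_def mem_Collect_eq eigen_iff
    by (simp add: endo.linear_0[OF \<psi>] endo.linear_add[OF \<psi>] endo.linear_scale[OF \<psi>]
        ract_commute[OF \<psi> \<psi>_L0] \<psi>_L0 \<psi>_Lm \<psi>_Lp endo.linear_0[OF linear_Lm]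
        endo.linear_0[OF linear_L0] endo.linear_0[OF linear_Lp])
qed

end

end

theorem proposition6p17:
  fixes s :: "complex \<Rightarrow> 'v::ab_group_add \<Rightarrow> 'v"
    and Lm L0 Lp :: "'v \<Rightarrow> 'v"
  assumes "rational_module s Lm L0 Lp"
    and "R_simple s Lm L0 Lp"
  shows "sl2_End s Lm L0 Lp = {(\<lambda>v. s c v) | c. True}"
proof -
  interpret rational_sl2_module s Lm L0 Lp
    using assms(1) by unfold_locales (simp_all add: rational_module_def)
  have "\<exists>c. \<phi> = s c" if \<phi>: "\<phi> \<in> sl2_End s Lm L0 Lp" for \<phi>
  proof -
    obtain g where "g \<noteq> 0" "\<And>w. pact s \<phi> g w = 0"
      using sl2_End_algebraic[OF \<phi>] by blast
    moreover obtain v :: 'v where "v \<noteq> 0"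
      using assms(2) by (auto simp: R_simple_def)
    ultimately obtain c w where w: "w \<noteq> 0" "\<phi> w = s c w"
      using exists_eigenvector[OF linear_\<phi>[OF \<phi>]] by blast
    then have "{w. \<phi> w = s c w} \<noteq> {0}"
      by auto
    then have "{w. \<phi> w = s c w} = UNIV"
      using assms(2) eigenspace_rational_submodule[OF \<phi>, of c] unfolding R_simple_def by blast
    then show ?thesis
      by auto
  qed
  then show ?thesis
    using scale_in_sl2_End by auto
qed

end
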